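(* Assume the standing hypotheses below. For each $n<\omega$ let $X_n$ be a fixed basis of $G_n$, let $\mathcal{B}_n$ be the family of all subgroups of $G_n$ generated by subsets of $X_n$, and let $\mathcal{B}'_n = \{ A \in \mathcal{B}_n : A + G_i \text{ is pure in } G \text{ for every } i<\omega\}$. Then the collection $$\mathcal{B} = \{ A \le G : A \cap G_n \in \mathcal{B}'_n \text{ for every } n < \omega \}$$ is a $G(\aleph_0)$-family of $G$ consisting of pure subgroups of $G$.
   Context: Standing hypotheses: $G$ is a torsion-free abelian group and $0 = G_0 < G_1 < \dots < G_n < \dots$ ($n<\omega$) is an ascending chain of subgroups of $G$ such that every $G_n$ is free, every $G_n$ is a pure subgroup of $G$, and $G = \bigcup_{n<\omega} G_n$. A subgroup $H$ of an abelian group $G$ is pure if solubility in $G$ of every equation $nx = h$ with $n\in\mathbb{Z}$, $h\in H$ implies its solubility in $H$. A $G(\aleph_0)$-family of an abelian group $M$ is a collection $\mathcal{C}$ of subgroups of $M$ such that: (i) $0 \in \mathcal{C}$ and $M \in \mathcal{C}$; (ii) $\mathcal{C}$ is closed under unions of ascending chains; (iii) for every $A_0 \in \mathcal{C}$ and every countable subset $H \subseteq M$ there exists $A \in \mathcal{C}$ with $A_0 \cup H \subseteq A$ and $A/A_0$ countable. *)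

theory Defs
  imports Main "HOL-Library.Countable_Set"
begin

text \<open>Abelian groups are rendered as subsets of an ambient type of class ab_group_add.\<close>

definition is_subgroup :: "'a::ab_group_add set \<Rightarrow> bool" where
  "is_subgroup H \<longleftrightarrow> 0 \<in> H \<and> (\<forall>x\<in>H. \<forall>y\<in>H. x + y \<in> H) \<and> (\<forall>x\<in>H. - x \<in> H)"

definition subgroup_of :: "'a::ab_group_add set \<Rightarrow> 'a set \<Rightarrow> bool" where
  "subgroup_of H G \<longleftrightarrow> is_subgroup H \<and> H \<subseteq> G"

definition natmul :: "nat \<Rightarrow> 'a::ab_group_add \<Rightarrow> 'a" where
  "natmul n x = ((\<lambda>y. y + x) ^^ n) 0"

definition zmul :: "int \<Rightarrow> 'a::ab_group_add \<Rightarrow> 'a" where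
  "zmul k x = (if 0 \<le> k then natmul (nat k) x else - natmul (nat (- k)) x)"

definition torsion_free :: "'a::ab_group_add set \<Rightarrow> bool" where
  "torsion_free G \<longleftrightarrow> (\<forall>x\<in>G. \<forall>n::int. n \<noteq> 0 \<longrightarrow> zmul n x = 0 \<longrightarrow> x = 0)"

definition pure_in :: "'a::ab_group_add set \<Rightarrow> 'a set \<Rightarrow> bool" where
  "pure_in H G \<longleftrightarrow> subgroup_of H G \<and>
     (\<forall>n::int. \<forall>h\<in>H. (\<exists>x\<in>G. zmul n x = h) \<longrightarrow> (\<exists>y\<in>H. zmul n y = h))"

definition gen :: "'a::ab_group_add set \<Rightarrow> 'a set" where
  "gen S = \<Inter>{H. is_subgroup H \<and> S \<subseteq> H}"

definition zindep :: "'a::ab_group_add set \<Rightarrow> bool" where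
  "zindep X \<longleftrightarrow> (\<forall>F c. finite F \<longrightarrow> F \<subseteq> X \<longrightarrow> (\<Sum>x\<in>F. zmul (c x) x) = 0 \<longrightarrow> (\<forall>x\<in>F. c x = 0))"

definition is_basis :: "'a::ab_group_add set \<Rightarrow> 'a set \<Rightarrow> bool" where
  "is_basis X H \<longleftrightarrow> X \<subseteq> H \<and> gen X = H \<and> zindep X"

definition free_group :: "'a::ab_group_add set \<Rightarrow> bool" where
  "free_group H \<longleftrightarrow> is_subgroup H \<and> (\<exists>X. is_basis X H)"

definition set_plus_grp :: "'a::ab_group_add set \<Rightarrow> 'a set \<Rightarrow> 'a set" where
  "set_plus_grp A B = {a + b | a b. a \<in> A \<and> b \<in> B}"

definition coset :: "'a::ab_group_add \<Rightarrow> 'a set \<Rightarrow> 'a set" where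
  "coset a A = {a + b | b. b \<in> A}"

text \<open>A/A0 countable: the set of cosets of A0 met by A is countable.\<close>
definition quotient_countable :: "'a::ab_group_add set \<Rightarrow> 'a set \<Rightarrow> bool" where
  "quotient_countable A A0 \<longleftrightarrow> countable ((\<lambda>a. coset a A0) ` A)"

definition G_aleph0_family :: "'a::ab_group_add set set \<Rightarrow> 'a set \<Rightarrow> bool" where
  "G_aleph0_family C M \<longleftrightarrow>
     (\<forall>A\<in>C. subgroup_of A M) \<and>
     {0} \<in> C \<and> M \<in> C \<and>
     (\<forall>K. K \<subseteq> C \<longrightarrow> K \<noteq> {} \<longrightarrow> Complete_Partial_Order.chain (\<subseteq>) K \<longrightarrow> \<Union>K \<in> C) \<and>
     (\<forall>A0\<in>C. \<forall>H. H \<subseteq> M \<longrightarrow> countable H \<longrightarrow>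
        (\<exists>A\<in>C. A0 \<union> H \<subseteq> A \<and> quotient_countable A A0))"

definition famB :: "(nat \<Rightarrow> 'a::ab_group_add set) \<Rightarrow> nat \<Rightarrow> 'a set set" where
  "famB X n = {gen S | S. S \<subseteq> X n}"

definition famB' :: "'a::ab_group_add set \<Rightarrow> (nat \<Rightarrow> 'a set) \<Rightarrow> (nat \<Rightarrow> 'a set) \<Rightarrow> nat \<Rightarrow> 'a set set" where
  "famB' G Gs X n = {A \<in> famB X n. \<forall>i. pure_in (set_plus_grp A (Gs i)) G}"

definition famBB :: "'a::ab_group_add set \<Rightarrow> (nat \<Rightarrow> 'a set) \<Rightarrow> (nat \<Rightarrow> 'a set) \<Rightarrow> 'a set set" where
  "famBB G Gs X = {A. subgroup_of A G \<and> (\<forall>n. A \<inter> Gs n \<in> famB' G Gs X n)}"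

end

theory Submission
  imports Defs
begin

(* The standing hypotheses are collected in the locale pure_filtration.
   Membership of A in the family B means: A is a subgroup of G, each A \<inter> G_n is generated
   by the basis elements of X_n it contains, and each (A \<inter> G_n) + G_i is pure in G
   (automatic for i \<ge> n).  Then:
   - {0} and G belong to B, and B is closed under unions of chains, since both defining
     conditions pass to unions of chains;
   - every member A is pure: A is the union of the chain A \<inter> G_n = (A \<inter> G_n) + G_0;
   - extension: given A0 in B and countable H, a countable closure argument produces a
     countable C \<supseteq> H such that each c \<in> \<langle>C\<rangle> has in C witnesses for two kinds of
     requirements (spanning translates of c by basis elements; roots of translates of c
     modulo G_i).  Then A = A0 + \<langle>C\<rangle> lies in B, the purity being obtained from a general
     approximation criterion, and A/A0 is countable since C is. *)

lemma subgroup_0: "is_subgroup H \<Longrightarrow> 0 \<in> H"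
  by (simp add: is_subgroup_def)

lemma subgroup_add: "is_subgroup H \<Longrightarrow> x \<in> H \<Longrightarrow> y \<in> H \<Longrightarrow> x + y \<in> H"
  by (simp add: is_subgroup_def)

lemma subgroup_neg: "is_subgroup H \<Longrightarrow> x \<in> H \<Longrightarrow> - x \<in> H"
  by (simp add: is_subgroup_def)

lemma subgroup_diff: "is_subgroup H \<Longrightarrow> x \<in> H \<Longrightarrow> y \<in> H \<Longrightarrow> x - y \<in> H"
  by (metis diff_conv_add_uminus subgroup_add subgroup_neg)

lemma subgroup_Int: "is_subgroup A \<Longrightarrow> is_subgroup B \<Longrightarrow> is_subgroup (A \<inter> B)"
  by (simp add: is_subgroup_def)

lemma gen_subgroup: "is_subgroup (gen S)"
  unfolding gen_def is_subgroup_def by auto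

lemma gen_sub: "S \<subseteq> gen S"
  unfolding gen_def by auto

lemma gen_least: "is_subgroup H \<Longrightarrow> S \<subseteq> H \<Longrightarrow> gen S \<subseteq> H"
  unfolding gen_def by auto

lemma gen_mono: "S \<subseteq> T \<Longrightarrow> gen S \<subseteq> gen T"
  unfolding gen_def by auto

text \<open>A countably generated subgroup is countable: it consists of sums of finite lists of
  generators and their negatives.\<close>

lemma gen_countable:
  assumes "countable S"
  shows "countable (gen S)"
proof -
  let ?T = "sum_list ` lists (S \<union> uminus ` S)"
  have "is_subgroup ?T"
    unfolding is_subgroup_def
  proof (intro conjI ballI)
    show "0 \<in> ?T" by (rule image_eqI[of _ _ "[]"]) auto
  next
    fix x y assume "x \<in> ?T" "y \<in> ?T"
    then obtain l1 l2 where "l1 \<in> lists (S \<union> uminus ` S)" "x = sum_list l1"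
      "l2 \<in> lists (S \<union> uminus ` S)" "y = sum_list l2" by auto
    then show "x + y \<in> ?T" by (intro image_eqI[of _ _ "l1 @ l2"]) auto
  next
    fix x assume "x \<in> ?T"
    then obtain l where l: "l \<in> lists (S \<union> uminus ` S)" "x = sum_list l" by auto
    then have "map uminus l \<in> lists (S \<union> uminus ` S)" by (force simp: image_iff)
    moreover have "- x = sum_list (map uminus l)"
      using l(2) uminus_sum_list_map[of id l] by simp
    ultimately show "- x \<in> ?T" by blast
  qed
  moreover have "S \<subseteq> ?T"
    by (auto intro!: image_eqI[of _ _ "[s]" for s])
  ultimately have "gen S \<subseteq> ?T" by (rule gen_least)
  moreover have "countable ?T" using assms by auto
  ultimately show ?thesis using countable_subset by blast
qed

lemma gen_finite_support:
  assumes "y \<in> gen S"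
  shows "\<exists>F. finite F \<and> F \<subseteq> S \<and> y \<in> gen F"
proof -
  let ?U = "{y. \<exists>F. finite F \<and> F \<subseteq> S \<and> y \<in> gen F}"
  have "is_subgroup ?U"
    unfolding is_subgroup_def
  proof (intro conjI ballI)
    show "0 \<in> ?U" using subgroup_0[OF gen_subgroup] by blast
  next
    fix x y assume "x \<in> ?U" "y \<in> ?U"
    then obtain F1 F2 where F: "finite F1" "F1 \<subseteq> S" "x \<in> gen F1"
      "finite F2" "F2 \<subseteq> S" "y \<in> gen F2" by auto
    then have "x \<in> gen (F1 \<union> F2)" "y \<in> gen (F1 \<union> F2)"
      using gen_mono[of F1 "F1 \<union> F2"] gen_mono[of F2 "F1 \<union> F2"] by auto
    then have "x + y \<in> gen (F1 \<union> F2)" by (rule subgroup_add[OF gen_subgroup])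
    then show "x + y \<in> ?U" using F by blast
  next
    fix x assume "x \<in> ?U"
    then show "- x \<in> ?U" using subgroup_neg[OF gen_subgroup] by blast
  qed
  moreover have "S \<subseteq> ?U"
    using gen_sub by (fastforce intro: exI[of _ "{s}" for s])
  ultimately show ?thesis using gen_least assms by blast
qed

lemma natmul_Suc: "natmul (Suc n) x = natmul n x + x"
  by (simp add: natmul_def)

lemma natmul_add: "natmul n (x + y) = natmul n x + natmul n y"
  by (induct n) (simp_all only: natmul_Suc, simp_all add: natmul_def ac_simps)

lemma natmul_neg: "natmul n (- x) = - natmul n x"
  by (induct n) (simp_all only: natmul_Suc, simp_all add: natmul_def add.commute)

lemma zmul_add: "zmul m (x + y) = zmul m x + zmul m y"
  unfolding zmul_def by (simp only: natmul_add minus_add_distrib split: if_split) simp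

lemma zmul_diff: "zmul m (x - y) = zmul m x - zmul m y"
  unfolding zmul_def diff_conv_add_uminus
  by (simp only: natmul_add natmul_neg minus_add_distrib split: if_split) simp

lemma set_plus_mem: "a \<in> A \<Longrightarrow> b \<in> B \<Longrightarrow> a + b \<in> set_plus_grp A B"
  unfolding set_plus_grp_def by blast

lemma set_plus_subgroup:
  assumes "is_subgroup A" "is_subgroup B"
  shows "is_subgroup (set_plus_grp A B)"
  unfolding is_subgroup_def
proof (intro conjI ballI)
  show "0 \<in> set_plus_grp A B"
    using set_plus_mem[OF subgroup_0 subgroup_0, OF assms] by simp
next
  fix x y assume "x \<in> set_plus_grp A B" "y \<in> set_plus_grp A B"
  then obtain a b a' b' where "x = a + b" "y = a' + b'" "a \<in> A" "b \<in> B" "a' \<in> A" "b' \<in> B"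
    unfolding set_plus_grp_def by auto
  moreover have "x + y = (a + a') + (b + b')" using calculation by (simp add: ac_simps)
  ultimately show "x + y \<in> set_plus_grp A B"
    using assms by (metis set_plus_mem subgroup_add)
next
  fix x assume "x \<in> set_plus_grp A B"
  then obtain a b where "x = a + b" "a \<in> A" "b \<in> B" unfolding set_plus_grp_def by auto
  then show "- x \<in> set_plus_grp A B"
    using assms by (metis set_plus_mem subgroup_neg minus_add_distrib add.commute)
qed

lemma set_plus_upper:
  "0 \<in> B \<Longrightarrow> A \<subseteq> set_plus_grp A B" "0 \<in> A \<Longrightarrow> B \<subseteq> set_plus_grp A B"
  using set_plus_mem[of _ A 0 B] set_plus_mem[of 0 A _ B] by auto

lemma set_plus_mono: "A \<subseteq> A' \<Longrightarrow> B \<subseteq> B' \<Longrightarrow> set_plus_grp A B \<subseteq> set_plus_grp A' B'"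
  unfolding set_plus_grp_def by blast

lemma set_plus_sub: "is_subgroup G \<Longrightarrow> A \<subseteq> G \<Longrightarrow> B \<subseteq> G \<Longrightarrow> set_plus_grp A B \<subseteq> G"
  unfolding set_plus_grp_def using subgroup_add by blast

lemma extension_contains:
  assumes "is_subgroup A0" "A = set_plus_grp A0 (gen C)"
  shows "A0 \<subseteq> A" "C \<subseteq> A"
proof -
  show "A0 \<subseteq> A" unfolding assms(2) by (rule set_plus_upper(1)[OF subgroup_0[OF gen_subgroup]])
  have "gen C \<subseteq> A" unfolding assms(2) by (rule set_plus_upper(2)[OF subgroup_0[OF assms(1)]])
  then show "C \<subseteq> A" using gen_sub by blast
qed

lemma set_plus_absorb_left:
  assumes "is_subgroup B" "A \<subseteq> B" "0 \<in> A"
  shows "set_plus_grp A B = B"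
proof
  show "set_plus_grp A B \<subseteq> B"
    unfolding set_plus_grp_def using assms subgroup_add by blast
  show "B \<subseteq> set_plus_grp A B"
    using set_plus_mem[OF assms(3), of _ B] by fastforce
qed

lemma set_plus_absorb_right:
  assumes "is_subgroup B" "A \<subseteq> B" "0 \<in> A"
  shows "set_plus_grp B A = B"
proof
  show "set_plus_grp B A \<subseteq> B"
    unfolding set_plus_grp_def using assms subgroup_add by blast
  show "B \<subseteq> set_plus_grp B A"
    using set_plus_mem[OF _ assms(3), of _ B] by fastforce
qed

lemma subgroup_Union_chain:
  assumes "Complete_Partial_Order.chain (\<subseteq>) K" "\<forall>A\<in>K. is_subgroup A" "K \<noteq> {}"
  shows "is_subgroup (\<Union>K)"
  unfolding is_subgroup_def
proof (intro conjI ballI)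
  show "0 \<in> \<Union>K" using assms subgroup_0 by blast
next
  fix x y assume "x \<in> \<Union>K" "y \<in> \<Union>K"
  then obtain A B where AB: "A \<in> K" "B \<in> K" "x \<in> A" "y \<in> B" by auto
  then have "A \<subseteq> B \<or> B \<subseteq> A" using chainD[OF assms(1)] by blast
  then show "x + y \<in> \<Union>K" using AB assms(2) subgroup_add by blast
next
  fix x assume "x \<in> \<Union>K"
  then show "- x \<in> \<Union>K" using assms(2) subgroup_neg by blast
qed

lemma pure_Union_chain:
  assumes "Complete_Partial_Order.chain (\<subseteq>) K" "\<forall>A\<in>K. pure_in A G" "K \<noteq> {}"
  shows "pure_in (\<Union>K) G"
proof -
  have "is_subgroup (\<Union>K)"
    using assms subgroup_Union_chain[OF assms(1)] by (simp add: pure_in_def subgroup_of_def)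
  moreover have "\<Union>K \<subseteq> G" using assms(2) by (auto simp: pure_in_def subgroup_of_def)
  moreover have "\<exists>y\<in>\<Union>K. zmul n y = h" if h: "h \<in> \<Union>K" "\<exists>x\<in>G. zmul n x = h" for n h
  proof -
    obtain A where "A \<in> K" "h \<in> A" using h(1) by auto
    then show ?thesis using assms(2) h(2) unfolding pure_in_def by blast
  qed
  ultimately show ?thesis unfolding pure_in_def subgroup_of_def by blast
qed

lemma chain_range_mono:
  assumes "mono (F :: nat \<Rightarrow> 'b set)"
  shows "Complete_Partial_Order.chain (\<subseteq>) (range F)"
proof (rule chainI)
  fix A B assume "A \<in> range F" "B \<in> range F"
  then obtain i j where "A = F i" "B = F j" by blast
  then show "A \<subseteq> B \<or> B \<subseteq> A"
    using monoD[OF assms, of i j] monoD[OF assms, of j i] by (cases "i \<le> j") auto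
qed

lemma pure_by_approximation:
  assumes G: "is_subgroup G" and D: "subgroup_of D G" and D0: "pure_in D0 G" "D0 \<subseteq> D"
    and approx: "\<And>m h. h \<in> D \<Longrightarrow> (\<exists>y\<in>G. zmul m y = h) \<Longrightarrow> \<exists>x\<in>D. h - zmul m x \<in> D0"
  shows "pure_in D G"
proof -
  have "\<exists>z\<in>D. zmul m z = h" if h: "h \<in> D" "y \<in> G" "zmul m y = h" for m h y
  proof -
    obtain x where x: "x \<in> D" "h - zmul m x \<in> D0" using approx h by blast
    have "x \<in> G" using x(1) D unfolding subgroup_of_def by blast
    then have "y - x \<in> G \<and> zmul m (y - x) = h - zmul m x"
      using subgroup_diff[OF G h(2)] h(3) by (simp add: zmul_diff)
    then obtain w where w: "w \<in> D0" "zmul m w = h - zmul m x"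
      using D0(1) x(2) unfolding pure_in_def by blast
    have "x + w \<in> D"
      using D x(1) w(1) D0(2) subgroup_add unfolding subgroup_of_def by blast
    moreover have "zmul m (x + w) = h" using w(2) by (simp add: zmul_add)
    ultimately show ?thesis by blast
  qed
  then show ?thesis using D unfolding pure_in_def by blast
qed

lemma coset_shift:
  assumes "is_subgroup A0" "a0 \<in> A0"
  shows "coset (a0 + c) A0 = coset c A0"
proof
  show "coset (a0 + c) A0 \<subseteq> coset c A0"
  proof
    fix z assume "z \<in> coset (a0 + c) A0"
    then obtain b where b: "b \<in> A0" "z = c + (a0 + b)"
      unfolding coset_def by (auto simp: ac_simps)
    then show "z \<in> coset c A0"
      using subgroup_add[OF assms b(1)] unfolding coset_def by blast
  qed
  show "coset c A0 \<subseteq> coset (a0 + c) A0"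
  proof
    fix z assume "z \<in> coset c A0"
    then obtain b where b: "b \<in> A0" "z = (a0 + c) + (b - a0)"
      unfolding coset_def by auto
    then show "z \<in> coset (a0 + c) A0"
      using subgroup_diff[OF assms(1) b(1) assms(2)] unfolding coset_def by blast
  qed
qed

lemma quotient_countable_set_plus:
  assumes "is_subgroup A0" "countable C"
  shows "quotient_countable (set_plus_grp A0 C) A0"
proof -
  have "(\<lambda>a. coset a A0) ` set_plus_grp A0 C \<subseteq> (\<lambda>c. coset c A0) ` C"
  proof
    fix w assume "w \<in> (\<lambda>a. coset a A0) ` set_plus_grp A0 C"
    then obtain z where z: "z \<in> set_plus_grp A0 C" "w = coset z A0" by blast
    then obtain a c where ac: "a \<in> A0" "c \<in> C" "z = a + c"
      unfolding set_plus_grp_def by blast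
    then have "w = coset c A0" using z(2) coset_shift[OF assms(1) ac(1)] by simp
    then show "w \<in> (\<lambda>c. coset c A0) ` C" using ac(2) by blast
  qed
  moreover have "countable ((\<lambda>c. coset c A0) ` C)" using assms(2) by simp
  ultimately show ?thesis unfolding quotient_countable_def by (rule countable_subset)
qed

lemma countable_witness_union:
  fixes Q :: "'i::countable \<Rightarrow> 'a set \<Rightarrow> bool"
  assumes wit: "\<And>k. \<exists>T. countable T \<and> T \<subseteq> U \<and> Q k T"
    and up: "\<And>k T T'. Q k T \<Longrightarrow> T \<subseteq> T' \<Longrightarrow> Q k T'"
  shows "\<exists>T. countable T \<and> T \<subseteq> U \<and> (\<forall>k. Q k T)"
proof -
  obtain f where f: "\<And>k. countable (f k) \<and> f k \<subseteq> U \<and> Q k (f k)" using wit by metis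
  have "countable (\<Union>k. f k)" using f by (intro countable_UN) auto
  moreover have "Q k (\<Union>k. f k)" for k using up[of k "f k"] f by blast
  ultimately show ?thesis using f by blast
qed

text \<open>C is the union of the iterates H, H \<union> witnesses for gen H, \<dots>\<close>

lemma countable_gen_closure:
  fixes P :: "'a::ab_group_add \<Rightarrow> 'i::countable \<Rightarrow> 'a set \<Rightarrow> bool"
  assumes H: "countable H" "H \<subseteq> U"
    and wit: "\<And>c k. \<exists>T. countable T \<and> T \<subseteq> U \<and> P c k T"
    and up: "\<And>c k T T'. P c k T \<Longrightarrow> T \<subseteq> T' \<Longrightarrow> P c k T'"
  shows "\<exists>C. countable C \<and> H \<subseteq> C \<and> C \<subseteq> U \<and> (\<forall>c\<in>gen C. \<forall>k. P c k C)"
proof -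
  have "\<exists>T. countable T \<and> T \<subseteq> U \<and> (\<forall>k. P c k T)" for c
    by (rule countable_witness_union[OF wit up])
  then obtain F where F: "\<And>c. countable (F c) \<and> F c \<subseteq> U \<and> (\<forall>k. P c k (F c))" by metis
  define Cs where "Cs k = ((\<lambda>D. D \<union> (\<Union>c\<in>gen D. F c)) ^^ k) H" for k
  have Cs_Suc: "Cs (Suc k) = Cs k \<union> (\<Union>c\<in>gen (Cs k). F c)" for k
    unfolding Cs_def by simp
  have Cs_small: "countable (Cs k) \<and> Cs k \<subseteq> U" for k
  proof (induct k)
    case 0 then show ?case using H by (simp add: Cs_def)
  next
    case (Suc k) then show ?case
      unfolding Cs_Suc using F gen_countable by (auto intro!: countable_UN)
  qed
  have "mono Cs" unfolding mono_iff_le_Suc Cs_Suc by blast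
  then have "mono (\<lambda>k. gen (Cs k))" using gen_mono unfolding mono_def by blast
  define C where "C = (\<Union>k. Cs k)"
  have "is_subgroup (\<Union>k. gen (Cs k))"
    using subgroup_Union_chain[OF chain_range_mono] \<open>mono (\<lambda>k. gen (Cs k))\<close> gen_subgroup
    by blast
  moreover have "C \<subseteq> (\<Union>k. gen (Cs k))" unfolding C_def using gen_sub by blast
  ultimately have gen_C: "gen C \<subseteq> (\<Union>k. gen (Cs k))" by (rule gen_least)
  have "\<forall>k. P c k C" if c: "c \<in> gen C" for c
  proof -
    obtain j where "c \<in> gen (Cs j)" using gen_C c by blast
    then have "F c \<subseteq> C" unfolding C_def using Cs_Suc[of j] by blast
    then show ?thesis using F up by blast
  qed
  moreover have "countable C" "C \<subseteq> U" unfolding C_def using Cs_small by auto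
  moreover have "H \<subseteq> C" unfolding C_def using Cs_def[of 0] by auto
  ultimately show ?thesis by blast
qed

lemma famB_iff: "B \<in> famB X n \<longleftrightarrow> is_subgroup B \<and> B \<subseteq> gen (B \<inter> X n)"
proof
  assume "B \<in> famB X n"
  then obtain S where S: "B = gen S" "S \<subseteq> X n" unfolding famB_def by blast
  then have "S \<subseteq> B \<inter> X n" using gen_sub by blast
  then show "is_subgroup B \<and> B \<subseteq> gen (B \<inter> X n)" using S gen_mono gen_subgroup by blast
next
  assume B: "is_subgroup B \<and> B \<subseteq> gen (B \<inter> X n)"
  then have "B = gen (B \<inter> X n)" using gen_least[of B "B \<inter> X n"] by blast
  then show "B \<in> famB X n" unfolding famB_def by blast
qed

locale pure_filtration =
  fixes G :: "'a::ab_group_add set" and Gs X :: "nat \<Rightarrow> 'a set"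
  assumes G_subgroup: "is_subgroup G"
    and Gs_subgroup: "\<And>n. is_subgroup (Gs n)"
    and Gs_sub: "\<And>n. Gs n \<subseteq> G"
    and Gs_mono: "\<And>i j. i \<le> j \<Longrightarrow> Gs i \<subseteq> Gs j"
    and Gs_pure: "\<And>n. pure_in (Gs n) G"
    and X_sub: "\<And>n. X n \<subseteq> Gs n"
    and X_gen: "\<And>n. gen (X n) = Gs n"
begin

lemma pure_set_plus_above:
  assumes "B \<subseteq> Gs n" "0 \<in> B" "n \<le> i"
  shows "pure_in (set_plus_grp B (Gs i)) G"
  using set_plus_absorb_left[OF Gs_subgroup, of B i] Gs_mono[OF assms(3)] assms Gs_pure
  by auto

lemma famB'_I:
  assumes "is_subgroup B" "B \<subseteq> Gs n" "B \<subseteq> gen (B \<inter> X n)"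
    and "\<And>i. i < n \<Longrightarrow> pure_in (set_plus_grp B (Gs i)) G"
  shows "B \<in> famB' G Gs X n"
proof -
  have "pure_in (set_plus_grp B (Gs i)) G" for i
  proof (cases "i < n")
    case False
    then show ?thesis using pure_set_plus_above[OF assms(2) subgroup_0[OF assms(1)]] by simp
  qed (rule assms(4))
  then show ?thesis using assms(1,3) unfolding famB'_def famB_iff by blast
qed

lemma famBB_I:
  assumes A: "subgroup_of A G" and "\<And>n. A \<inter> Gs n \<subseteq> gen (A \<inter> Gs n \<inter> X n)"
    and "\<And>n i. i < n \<Longrightarrow> pure_in (set_plus_grp (A \<inter> Gs n) (Gs i)) G"
  shows "A \<in> famBB G Gs X"
proof -
  have "is_subgroup (A \<inter> Gs n)" for n
    using A subgroup_Int[OF _ Gs_subgroup] unfolding subgroup_of_def by blast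
  then have "A \<inter> Gs n \<in> famB' G Gs X n" for n
    using assms(2,3) by (intro famB'_I) auto
  then show ?thesis using A unfolding famBB_def by blast
qed

lemma famBB_D:
  assumes "A \<in> famBB G Gs X"
  shows "is_subgroup A" "A \<subseteq> G" "A \<inter> Gs n \<subseteq> gen (A \<inter> Gs n \<inter> X n)"
    and "pure_in (set_plus_grp (A \<inter> Gs n) (Gs i)) G"
proof -
  have "subgroup_of A G" and An: "A \<inter> Gs n \<in> famB' G Gs X n"
    using assms unfolding famBB_def by auto
  then show "is_subgroup A" "A \<subseteq> G" unfolding subgroup_of_def by auto
  from An show "A \<inter> Gs n \<subseteq> gen (A \<inter> Gs n \<inter> X n)"
    and "pure_in (set_plus_grp (A \<inter> Gs n) (Gs i)) G"
    unfolding famB'_def famB_iff by auto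
qed

lemma famBB_zero: "{0} \<in> famBB G Gs X"
proof (rule famBB_I)
  show "subgroup_of {0} G"
    using subgroup_0[OF G_subgroup] unfolding subgroup_of_def is_subgroup_def by simp
  fix n i :: nat
  have zero_Gs: "{0} \<inter> Gs n = {0}" using subgroup_0[OF Gs_subgroup] by blast
  then show "{0} \<inter> Gs n \<subseteq> gen ({0} \<inter> Gs n \<inter> X n)"
    using subgroup_0[OF gen_subgroup] by simp
  have "set_plus_grp {0} (Gs i) = Gs i"
    by (rule set_plus_absorb_left[OF Gs_subgroup]) (simp_all add: subgroup_0[OF Gs_subgroup])
  then show "pure_in (set_plus_grp ({0} \<inter> Gs n) (Gs i)) G" using zero_Gs Gs_pure by simp
qed

lemma famBB_whole: "G \<in> famBB G Gs X"
proof (rule famBB_I)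
  show "subgroup_of G G" using G_subgroup unfolding subgroup_of_def by simp
  fix n i :: nat
  have G_Gs: "G \<inter> Gs n = Gs n" using Gs_sub by blast
  then show "G \<inter> Gs n \<subseteq> gen (G \<inter> Gs n \<inter> X n)"
    using X_gen X_sub by (simp add: Int_absorb1)
  assume "i < n"
  then have "set_plus_grp (Gs n) (Gs i) = Gs n"
    by (intro set_plus_absorb_right Gs_subgroup Gs_mono subgroup_0) simp_all
  then show "pure_in (set_plus_grp (G \<inter> Gs n) (Gs i)) G" using G_Gs Gs_pure by simp
qed

lemma famBB_chain:
  assumes K: "K \<subseteq> famBB G Gs X" "K \<noteq> {}" "Complete_Partial_Order.chain (\<subseteq>) K"
  shows "\<Union>K \<in> famBB G Gs X"
proof (rule famBB_I)
  have "is_subgroup (\<Union>K)" using subgroup_Union_chain[OF K(3) _ K(2)] famBB_D(1) K(1) by blast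
  then show "subgroup_of (\<Union>K) G" using famBB_D(2) K(1) unfolding subgroup_of_def by blast
  fix n i :: nat
  show "\<Union>K \<inter> Gs n \<subseteq> gen (\<Union>K \<inter> Gs n \<inter> X n)"
  proof
    fix z assume "z \<in> \<Union>K \<inter> Gs n"
    then obtain A where A: "A \<in> K" "z \<in> A \<inter> Gs n" by blast
    then have "z \<in> gen (A \<inter> Gs n \<inter> X n)" using famBB_D(3) K(1) by blast
    moreover have "gen (A \<inter> Gs n \<inter> X n) \<subseteq> gen (\<Union>K \<inter> Gs n \<inter> X n)"
      using A(1) by (intro gen_mono) blast
    ultimately show "z \<in> gen (\<Union>K \<inter> Gs n \<inter> X n)" by blast
  qed
  let ?f = "\<lambda>A. set_plus_grp (A \<inter> Gs n) (Gs i)"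
  have "set_plus_grp (\<Union>K \<inter> Gs n) (Gs i) = \<Union>(?f ` K)"
    unfolding set_plus_grp_def by blast
  moreover have "Complete_Partial_Order.chain (\<subseteq>) (?f ` K)"
    by (rule chain_imageI[OF K(3)]) (auto simp: set_plus_grp_def)
  moreover have "\<forall>D\<in>?f ` K. pure_in D G" using famBB_D(4) K(1) by blast
  ultimately show "pure_in (set_plus_grp (\<Union>K \<inter> Gs n) (Gs i)) G"
    using pure_Union_chain[of "?f ` K"] K(2) by simp
qed

text \<open>Members of B are pure: A is the union of the chain of the A \<inter> G_n, and each of these
  equals (A \<inter> G_n) + G_0, which is pure by definition of B'_n.\<close>

lemma famBB_pure:
  assumes Gs_0: "Gs 0 = {0}" and Gs_Union: "(\<Union>n. Gs n) = G"
    and A: "A \<in> famBB G Gs X"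
  shows "pure_in A G"
proof -
  have "mono (\<lambda>n. A \<inter> Gs n)" using Gs_mono unfolding mono_def by blast
  then have chain: "Complete_Partial_Order.chain (\<subseteq>) (range (\<lambda>n. A \<inter> Gs n))"
    by (rule chain_range_mono)
  have "set_plus_grp (A \<inter> Gs n) (Gs 0) = A \<inter> Gs n" for n
    unfolding Gs_0 using subgroup_0 famBB_D(1)[OF A] Gs_subgroup
    by (intro set_plus_absorb_right subgroup_Int) auto
  then have "pure_in (A \<inter> Gs n) G" for n using famBB_D(4)[OF A, of n 0] by simp
  then have "pure_in (\<Union>n. A \<inter> Gs n) G" using pure_Union_chain[OF chain] by blast
  moreover have "(\<Union>n. A \<inter> Gs n) = A" using famBB_D(2)[OF A] Gs_Union by blast
  ultimately show ?thesis by simp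
qed

text \<open>Requirements on a countable set T relative to an element c, used to close up the
  extension A0 + \<langle>C\<rangle>.\<close>

definition span_req :: "'a set \<Rightarrow> nat \<Rightarrow> 'a \<Rightarrow> 'a set \<Rightarrow> bool" where
  "span_req A0 n c T \<longleftrightarrow> (\<exists>a\<in>A0. a + c \<in> Gs n) \<longrightarrow> (\<exists>a\<in>A0. a + c \<in> gen (T \<inter> X n))"

definition root_of :: "'a set \<Rightarrow> nat \<Rightarrow> nat \<Rightarrow> int \<Rightarrow> 'a \<Rightarrow> 'a \<Rightarrow> bool" where
  "root_of A0 n i m c x \<longleftrightarrow>
     x \<in> Gs n \<and> (\<exists>a\<in>A0. \<exists>g\<in>Gs i. a + c \<in> Gs n \<and> zmul m x = a + c + g)"

definition root_req :: "'a set \<Rightarrow> nat \<Rightarrow> nat \<Rightarrow> int \<Rightarrow> 'a \<Rightarrow> 'a set \<Rightarrow> bool" where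
  "root_req A0 n i m c T \<longleftrightarrow> (\<exists>x. root_of A0 n i m c x) \<longrightarrow> (\<exists>x\<in>T. root_of A0 n i m c x)"

lemma span_req_witness: "\<exists>T. countable T \<and> T \<subseteq> G \<and> span_req A0 n c T"
proof (cases "\<exists>a\<in>A0. a + c \<in> Gs n")
  case True
  then obtain a where a: "a \<in> A0" "a + c \<in> Gs n" by blast
  then obtain F where F: "finite F" "F \<subseteq> X n" "a + c \<in> gen F"
    using gen_finite_support[of "a + c" "X n"] X_gen by auto
  then have "F \<subseteq> G" using X_sub Gs_sub by blast
  moreover have "span_req A0 n c F" using a F unfolding span_req_def by (auto simp: Int_absorb2)
  ultimately show ?thesis using F(1) countable_finite by blast
qed (auto simp: span_req_def)

lemma span_req_mono: "span_req A0 n c T \<Longrightarrow> T \<subseteq> T' \<Longrightarrow> span_req A0 n c T'"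
  unfolding span_req_def using gen_mono[of "T \<inter> X n" "T' \<inter> X n"] by blast

lemma root_req_witness: "\<exists>T. countable T \<and> T \<subseteq> G \<and> root_req A0 n i m c T"
proof (cases "\<exists>x. root_of A0 n i m c x")
  case True
  then obtain x where "root_of A0 n i m c x" by blast
  moreover have "x \<in> G" using calculation Gs_sub unfolding root_of_def by blast
  ultimately show ?thesis unfolding root_req_def by (intro exI[of _ "{x}"]) auto
qed (auto simp: root_req_def)

lemma root_req_mono: "root_req A0 n i m c T \<Longrightarrow> T \<subseteq> T' \<Longrightarrow> root_req A0 n i m c T'"
  unfolding root_req_def by blast

text \<open>If C meets all spanning requirements, then (A0 + \<langle>C\<rangle>) \<inter> G_n is generated by its basis
  elements: write z = a + c, replace a by a' with a' + c spanned by basis elements of C,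
  and note that a - a' lies in A0 \<inter> G_n, which is spanned by its own basis elements.\<close>

lemma extension_spanned:
  assumes A0: "A0 \<in> famBB G Gs X" and C: "\<forall>c\<in>gen C. span_req A0 n c C"
    and A: "A = set_plus_grp A0 (gen C)"
  shows "A \<inter> Gs n \<subseteq> gen (A \<inter> Gs n \<inter> X n)"
proof
  fix z assume z: "z \<in> A \<inter> Gs n"
  then obtain a c where ac: "z = a + c" "a \<in> A0" "c \<in> gen C"
    unfolding A set_plus_grp_def by blast
  then obtain a' where a': "a' \<in> A0" "a' + c \<in> gen (C \<inter> X n)"
    using C z unfolding span_req_def by blast
  have A0_sg: "is_subgroup A0" using famBB_D(1)[OF A0] .
  note A_contains = extension_contains[OF A0_sg A]
  have "gen (C \<inter> X n) \<subseteq> Gs n" using X_gen gen_mono[of "C \<inter> X n" "X n"] by blast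
  then have "(a + c) - (a' + c) \<in> Gs n"
    using subgroup_diff[OF Gs_subgroup] z ac(1) a'(2) by blast
  moreover have "a - a' \<in> A0" using subgroup_diff[OF A0_sg ac(2) a'(1)] .
  ultimately have "a - a' \<in> A0 \<inter> Gs n" by simp
  then have "a - a' \<in> gen (A0 \<inter> Gs n \<inter> X n)" using famBB_D(3)[OF A0] by blast
  also have "\<dots> \<subseteq> gen (A \<inter> Gs n \<inter> X n)" using A_contains(1) by (intro gen_mono) blast
  finally have 1: "a - a' \<in> gen (A \<inter> Gs n \<inter> X n)" .
  have "gen (C \<inter> X n) \<subseteq> gen (A \<inter> Gs n \<inter> X n)"
    using A_contains(2) X_sub by (intro gen_mono) blast
  then have 2: "a' + c \<in> gen (A \<inter> Gs n \<inter> X n)" using a'(2) by blast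
  have "z = (a' + c) + (a - a')" using ac(1) by (simp add: algebra_simps)
  then show "z \<in> gen (A \<inter> Gs n \<inter> X n)" using subgroup_add[OF gen_subgroup 2 1] by simp
qed

text \<open>If C meets all root requirements, then (A0 \<inter> G_n) + G_i being pure forces
  ((A0 + \<langle>C\<rangle>) \<inter> G_n) + G_i to be pure, for i < n: a root in G of h = a + c + g lies in G_n,
  so C contains a root x of some a' + c + g', and h - m x lies in (A0 \<inter> G_n) + G_i.\<close>

lemma extension_pure:
  assumes A0: "A0 \<in> famBB G Gs X" and C: "\<forall>c\<in>gen C. \<forall>m. root_req A0 n i m c C"
    and A: "A = set_plus_grp A0 (gen C)" and "i < n"
  shows "pure_in (set_plus_grp (A \<inter> Gs n) (Gs i)) G"
proof (rule pure_by_approximation[OF G_subgroup])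
  let ?E = "set_plus_grp (A \<inter> Gs n) (Gs i)" and ?B = "set_plus_grp (A0 \<inter> Gs n) (Gs i)"
  have A0_sg: "is_subgroup A0" using famBB_D(1)[OF A0] .
  have A_sg: "is_subgroup A" unfolding A by (rule set_plus_subgroup[OF A0_sg gen_subgroup])
  note A_contains = extension_contains[OF A0_sg A]
  have "Gs i \<subseteq> Gs n" using Gs_mono \<open>i < n\<close> by simp
  then have E_Gs: "?E \<subseteq> Gs n" by (intro set_plus_sub Gs_subgroup) auto
  show "subgroup_of ?E G"
    using set_plus_subgroup[OF subgroup_Int[OF A_sg Gs_subgroup] Gs_subgroup] E_Gs Gs_sub
    unfolding subgroup_of_def by blast
  show "pure_in ?B G" using famBB_D(4)[OF A0] .
  show "?B \<subseteq> ?E" using A_contains(1) by (intro set_plus_mono) auto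
  fix m h assume h: "h \<in> ?E" "\<exists>y\<in>G. zmul m y = h"
  then obtain z g where zg: "h = z + g" "z \<in> A \<inter> Gs n" "g \<in> Gs i"
    unfolding set_plus_grp_def by blast
  then obtain a c where ac: "z = a + c" "a \<in> A0" "c \<in> gen C"
    unfolding A set_plus_grp_def by blast
  have "h \<in> Gs n" using h(1) E_Gs by blast
  then obtain x1 where "x1 \<in> Gs n" "zmul m x1 = h"
    using Gs_pure[of n] h(2) unfolding pure_in_def by blast
  then have "root_of A0 n i m c x1" unfolding root_of_def using zg ac by auto
  then obtain x a' g' where x: "x \<in> C" "x \<in> Gs n" and a'g': "a' \<in> A0" "g' \<in> Gs i"
    "a' + c \<in> Gs n" "zmul m x = a' + c + g'"
    using C ac(3) unfolding root_req_def root_of_def by blast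
  have "x + 0 \<in> ?E"
    using x A_contains(2) subgroup_0[OF Gs_subgroup] by (intro set_plus_mem) auto
  then have x_E: "x \<in> ?E" by simp
  have "(a + c) - (a' + c) \<in> Gs n"
    using subgroup_diff[OF Gs_subgroup] zg(2) ac(1) a'g'(3) by blast
  moreover have "a - a' \<in> A0" using subgroup_diff[OF A0_sg ac(2) a'g'(1)] .
  ultimately have "a - a' \<in> A0 \<inter> Gs n" by simp
  moreover have "g - g' \<in> Gs i" using subgroup_diff[OF Gs_subgroup zg(3) a'g'(2)] .
  ultimately have "(a - a') + (g - g') \<in> ?B" by (rule set_plus_mem)
  moreover have "h - zmul m x = (a - a') + (g - g')"
    using zg(1) ac(1) a'g'(4) by (simp add: algebra_simps)
  ultimately show "\<exists>x\<in>?E. h - zmul m x \<in> ?B" using x_E by (intro bexI[of _ x]) simp_all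
qed

lemma famBB_extension:
  assumes A0: "A0 \<in> famBB G Gs X" and H: "H \<subseteq> G" "countable H"
  shows "\<exists>A\<in>famBB G Gs X. A0 \<union> H \<subseteq> A \<and> quotient_countable A A0"
proof -
  define req :: "'a \<Rightarrow> nat + nat \<times> nat \<times> int \<Rightarrow> 'a set \<Rightarrow> bool" where
    "req c k T = (case k of Inl n \<Rightarrow> span_req A0 n c T | Inr (n, i, m) \<Rightarrow> root_req A0 n i m c T)"
    for c k T
  have "\<exists>T. countable T \<and> T \<subseteq> G \<and> req c k T" for c k
  proof (cases k)
    case (Inl n)
    then show ?thesis using span_req_witness[of A0 n c] by (simp add: req_def)
  next
    case (Inr nim)
    then obtain n i m where "k = Inr (n, i, m)" by (metis prod_cases3)
    then show ?thesis using root_req_witness[of A0 n i m c] by (simp add: req_def)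
  qed
  moreover have "req c k T'" if req: "req c k T" and "T \<subseteq> T'" for c k T T'
  proof (cases k)
    case (Inl n)
    then show ?thesis using req span_req_mono[OF _ \<open>T \<subseteq> T'\<close>] by (simp add: req_def)
  next
    case (Inr nim)
    then obtain n i m where "k = Inr (n, i, m)" by (metis prod_cases3)
    then show ?thesis using req root_req_mono[OF _ \<open>T \<subseteq> T'\<close>] by (simp add: req_def)
  qed
  ultimately obtain C where C: "countable C" "H \<subseteq> C" "C \<subseteq> G" "\<forall>c\<in>gen C. \<forall>k. req c k C"
    using countable_gen_closure[OF H(2,1), of req] by blast
  define A where "A = set_plus_grp A0 (gen C)"
  have A0_sg: "is_subgroup A0" using famBB_D(1)[OF A0] .
  have "A \<in> famBB G Gs X"
  proof (rule famBB_I)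
    have "A \<subseteq> G" unfolding A_def
      using set_plus_sub[OF G_subgroup famBB_D(2)[OF A0] gen_least[OF G_subgroup C(3)]] .
    then show "subgroup_of A G" unfolding subgroup_of_def A_def
      using set_plus_subgroup[OF A0_sg gen_subgroup] by blast
    show "A \<inter> Gs n \<subseteq> gen (A \<inter> Gs n \<inter> X n)" for n
    proof (rule extension_spanned[OF A0 _ A_def], intro ballI)
      fix c assume "c \<in> gen C"
      then have "req c (Inl n) C" using C(4) by blast
      then show "span_req A0 n c C" by (simp add: req_def)
    qed
    show "pure_in (set_plus_grp (A \<inter> Gs n) (Gs i)) G" if "i < n" for n i
    proof (rule extension_pure[OF A0 _ A_def that], intro ballI allI)
      fix c m assume "c \<in> gen C"
      then have "req c (Inr (n, i, m)) C" using C(4) by blast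
      then show "root_req A0 n i m c C" by (simp add: req_def)
    qed
  qed
  moreover have "A0 \<union> H \<subseteq> A" using extension_contains[OF A0_sg A_def] C(2) by blast
  moreover have "quotient_countable A A0"
    unfolding A_def by (rule quotient_countable_set_plus[OF A0_sg gen_countable[OF C(1)]])
  ultimately show ?thesis by blast
qed

end

theorem lemma3:
  fixes G :: "'a::ab_group_add set"
    and Gs :: "nat \<Rightarrow> 'a set"
    and X :: "nat \<Rightarrow> 'a set"
  assumes "is_subgroup G"
    and "torsion_free G"
    and "Gs 0 = {0}"
    and "\<And>n. Gs n \<subset> Gs (Suc n)"
    and "\<And>n. subgroup_of (Gs n) G"
    and "\<And>n. free_group (Gs n)"
    and "\<And>n. pure_in (Gs n) G"
    and "(\<Union>n. Gs n) = G"
    and "\<And>n. is_basis (X n) (Gs n)"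
  shows "G_aleph0_family (famBB G Gs X) G \<and> (\<forall>A\<in>famBB G Gs X. pure_in A G)"
proof -
  interpret pure_filtration G Gs X
  proof
    show "is_subgroup G" "\<And>n. pure_in (Gs n) G" by (fact assms(1), fact assms(7))
    show "is_subgroup (Gs n)" "Gs n \<subseteq> G" for n using assms(5) by (auto simp: subgroup_of_def)
    show "Gs i \<subseteq> Gs j" if "i \<le> j" for i j
      using lift_Suc_mono_le[of Gs, OF _ that] assms(4) by blast
    show "X n \<subseteq> Gs n" "gen (X n) = Gs n" for n using assms(9) by (auto simp: is_basis_def)
  qed
  have "\<forall>A\<in>famBB G Gs X. subgroup_of A G" using famBB_D(1,2) by (simp add: subgroup_of_def)
  then have "G_aleph0_family (famBB G Gs X) G"
    unfolding G_aleph0_family_def using famBB_zero famBB_whole famBB_chain famBB_extension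
    by blast
  then show ?thesis using famBB_pure[OF assms(3,8)] by blast
qed

end
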